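(* Let $q\in\mathbb{C}^\times$ be not a root of unity, $k\in\mathbb{Z}_{>0}$ and $Q,\beta\in\mathbb{C}^\times$. The polynomials $p^{\langle Q\rangle}_t(q;\beta)(x_1,\dots,x_k)$, $1\le t\le k$, are algebraically independent over $\mathbb{C}$.
   Context: For $t,k>0$, $p_t(q)(x_1,\dots,x_k)=\sum_{\lambda\vdash t,\ \ell(\lambda)\le k}q^{-\ell(\lambda)}(q-q^{-1})^{\ell(\lambda)-1}m_\lambda(x_1,\dots,x_k)$ ($\lambda$ partitions of $t$ with at most $k$ nonzero parts, $m_\lambda$ monomial symmetric polynomial). With $\tilde\beta=(q-q^{-1})^{-1}(1-\beta^{-2})$, $p^{\langle Q\rangle}_t(q;\beta)(x_1,\dots,x_k)=p_t(q)(x_1,\dots,x_k)+\tilde\beta Q^{-t}+(q-q^{-1})\sum_{z=1}^{t-1}\tilde\beta Q^{-t+z}p_z(q)(x_1,\dots,x_k)$. *)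

theory Defs
  imports Complex_Main "HOL-Library.Poly_Mapping"
begin

definition partitions_le :: "nat \<Rightarrow> nat \<Rightarrow> nat list set" where
  "partitions_le t k = {lam. sorted (rev lam) \<and> 0 \<notin> set lam \<and> sum_list lam = t \<and> length lam \<le> k}"

text \<open>Monomial symmetric polynomial m_lam(x_1,...,x_k) as a function of x (only x 1 .. x k are used):
  sum of the distinct monomials x^alpha, alpha in N^k a rearrangement of lam padded with zeros.\<close>
definition monomial_sym :: "nat \<Rightarrow> nat list \<Rightarrow> (nat \<Rightarrow> complex) \<Rightarrow> complex" where
  "monomial_sym k lam x =
     (\<Sum>alpha\<in>{alpha. length alpha = k \<and> rev (sort (filter (\<lambda>a. a \<noteq> 0) alpha)) = lam}.
        \<Prod>i<k. x (Suc i) ^ (alpha ! i))"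

definition p_poly :: "nat \<Rightarrow> complex \<Rightarrow> nat \<Rightarrow> (nat \<Rightarrow> complex) \<Rightarrow> complex" where
  "p_poly t q k x =
     (\<Sum>lam\<in>partitions_le t k.
        q powi (- int (length lam)) * (q - inverse q) ^ (length lam - 1) * monomial_sym k lam x)"

definition beta_tilde :: "complex \<Rightarrow> complex \<Rightarrow> complex" where
  "beta_tilde q \<beta> = inverse (q - inverse q) * (1 - \<beta> powi (-2))"

definition pQ_poly :: "complex \<Rightarrow> nat \<Rightarrow> complex \<Rightarrow> complex \<Rightarrow> nat \<Rightarrow> (nat \<Rightarrow> complex) \<Rightarrow> complex" where
  "pQ_poly Q t q \<beta> k x =
     p_poly t q k x + beta_tilde q \<beta> * Q powi (- int t)
     + (q - inverse q) * (\<Sum>z = 1..<t. beta_tilde q \<beta> * Q powi (int z - int t) * p_poly z q k x)"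

text \<open>Multivariate polynomials over C: finitely supported coefficient maps on monomials
  (a monomial is a finitely supported exponent map on variable indices).\<close>
type_synonym mpoly = "(nat \<Rightarrow>\<^sub>0 nat) \<Rightarrow>\<^sub>0 complex"

definition mpoly_eval :: "mpoly \<Rightarrow> (nat \<Rightarrow> complex) \<Rightarrow> complex" where
  "mpoly_eval F y = sum (\<lambda>m. Poly_Mapping.lookup F m * prod (\<lambda>i. y i ^ Poly_Mapping.lookup m i) (Poly_Mapping.keys m)) (Poly_Mapping.keys F)"

text \<open>Polynomial functions f 1, ..., f n (in the variables x) are algebraically independent over C:
  no nonzero polynomial F in n variables Y_1..Y_n gives F(f_1,...,f_n) = 0.  Over the infinite field C
  a polynomial is zero iff it vanishes as a function, which is how the vanishing is expressed.\<close>
definition alg_indep :: "nat \<Rightarrow> (nat \<Rightarrow> (nat \<Rightarrow> complex) \<Rightarrow> complex) \<Rightarrow> bool" where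
  "alg_indep n f \<longleftrightarrow>
     (\<forall>F::mpoly. F \<noteq> 0 \<and> (\<forall>m\<in>Poly_Mapping.keys F. Poly_Mapping.keys m \<subseteq> {1..n}) \<longrightarrow>
        \<not> (\<forall>x. mpoly_eval F (\<lambda>i. f i x) = 0))"

end

theory Submission
  imports
    Defs
    "HOL-Computational_Algebra.Polynomial_FPS"
    "HOL-Computational_Algebra.Fundamental_Theorem_Algebra"
begin

unbundle fps_syntax

(* A polynomial map C^k -> C^k that is onto has algebraically independent components, since a
   nonzero polynomial does not vanish identically (Kronecker substitution).  The p^<Q>_t differ
   from the p_t by a unitriangular affine change, so it suffices that (p_1, ..., p_k) is onto.
   Up to the factor q - q^-1, p_t(x) is the coefficient of T^t in
   R(T) = prod_i (1 - a x_i T) / (1 - x_i T) with a = q^-2.  Given target coefficients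
   r_1, ..., r_k, solve r(T) E(T) = E(aT) for a series E with E(0) = 1, which is possible
   because a is not a root of unity; factoring the truncation of E as prod_i (1 - x_i T) by the
   fundamental theorem of algebra yields R E = E(aT) as well, hence R = r up to degree k. *)

section \<open>Kronecker substitution\<close>

lemma base_digits_inj:
  fixes f g :: "nat \<Rightarrow> nat"
  assumes "\<forall>i<n. f i < D" "\<forall>i<n. g i < D"
    and "(\<Sum>i<n. f i * D ^ i) = (\<Sum>i<n. g i * D ^ i)"
  shows "\<forall>i<n. f i = g i"
  using assms
proof (induction n arbitrary: f g)
  case 0
  then show ?case by simp
next
  case (Suc n)
  have expand: "(\<Sum>i<Suc n. h i * D ^ i) = h 0 + D * (\<Sum>i<n. h (Suc i) * D ^ i)"
    for h :: "nat \<Rightarrow> nat"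
    unfolding sum.lessThan_Suc_shift by (simp add: sum_distrib_left mult_ac)
  have eq: "f 0 + D * (\<Sum>i<n. f (Suc i) * D ^ i) = g 0 + D * (\<Sum>i<n. g (Suc i) * D ^ i)"
    using Suc.prems(3) by (simp only: expand)
  have "f 0 < D" "g 0 < D"
    using Suc.prems by auto
  then have "f 0 = g 0" and "(\<Sum>i<n. f (Suc i) * D ^ i) = (\<Sum>i<n. g (Suc i) * D ^ i)"
    using arg_cong[OF eq, of "\<lambda>z. z mod D"] arg_cong[OF eq, of "\<lambda>z. z div D"] by simp_all
  moreover have "\<forall>i<n. f (Suc i) < D" "\<forall>i<n. g (Suc i) < D"
    using Suc.prems(1,2) by simp_all
  ultimately have "\<forall>i<n. f (Suc i) = g (Suc i)"
    using Suc.IH[of "\<lambda>i. f (Suc i)" "\<lambda>i. g (Suc i)"] by blast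
  with \<open>f 0 = g 0\<close> show ?case
    by (simp add: All_less_Suc2)
qed

definition kronecker_exponent :: "nat \<Rightarrow> (nat \<Rightarrow>\<^sub>0 nat) \<Rightarrow> nat" where
  "kronecker_exponent D m = (\<Sum>i\<in>Poly_Mapping.keys m. Poly_Mapping.lookup m i * D ^ i)"

lemma kronecker_exponent_inj:
  assumes "Poly_Mapping.keys m \<subseteq> {..<N}" "Poly_Mapping.keys m' \<subseteq> {..<N}"
    and "\<forall>i. Poly_Mapping.lookup m i < D" "\<forall>i. Poly_Mapping.lookup m' i < D"
    and "kronecker_exponent D m = kronecker_exponent D m'"
  shows "m = m'"
proof -
  have as_sum: "kronecker_exponent D n = (\<Sum>i<N. Poly_Mapping.lookup n i * D ^ i)"
    if "Poly_Mapping.keys n \<subseteq> {..<N}" for n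
    unfolding kronecker_exponent_def
    by (rule sum.mono_neutral_left) (use that in \<open>auto simp: in_keys_iff\<close>)
  have "Poly_Mapping.lookup m i = Poly_Mapping.lookup m' i" for i
  proof (cases "i < N")
    case True
    then show ?thesis
      using base_digits_inj[of N "Poly_Mapping.lookup m" D "Poly_Mapping.lookup m'"] assms
        as_sum[OF assms(1)] as_sum[OF assms(2)] by auto
  next
    case False
    then have "i \<notin> Poly_Mapping.keys m" "i \<notin> Poly_Mapping.keys m'"
      using assms(1,2) by auto
    then show ?thesis
      by (simp add: in_keys_iff)
  qed
  then show ?thesis
    by (rule poly_mapping_eqI)
qed

lemma mpoly_eval_kronecker:
  "mpoly_eval F (\<lambda>i. s ^ (D ^ i)) =
     poly (\<Sum>m\<in>Poly_Mapping.keys F. monom (Poly_Mapping.lookup F m) (kronecker_exponent D m)) s"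
  unfolding mpoly_eval_def poly_sum poly_monom kronecker_exponent_def
  by (simp add: power_mult[symmetric] power_sum mult.commute)

lemma mpoly_eval_not_identically_zero:
  fixes F :: mpoly
  assumes "F \<noteq> 0"
  shows "\<exists>y. mpoly_eval F y \<noteq> 0"
proof -
  obtain N where "(\<Union>m\<in>Poly_Mapping.keys F. Poly_Mapping.keys m) \<subseteq> {..<N}"
    using finite_nat_bounded by (metis finite_UN finite_keys)
  then have N: "Poly_Mapping.keys m \<subseteq> {..<N}" if "m \<in> Poly_Mapping.keys F" for m
    using that by auto
  obtain D where D: "insert 0 ((\<lambda>(m, i). Poly_Mapping.lookup m i) `
      (SIGMA m:Poly_Mapping.keys F. Poly_Mapping.keys m)) \<subseteq> {..<D}"
    using finite_nat_bounded by (metis finite_SigmaI finite_imageI finite_insert finite_keys)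
  have D': "\<forall>i. Poly_Mapping.lookup m i < D" if "m \<in> Poly_Mapping.keys F" for m
    using D that by (force simp: in_keys_iff)
  define P where
    "P = (\<Sum>m\<in>Poly_Mapping.keys F. monom (Poly_Mapping.lookup F m) (kronecker_exponent D m))"
  obtain m0 where m0: "m0 \<in> Poly_Mapping.keys F"
    using assms by (metis keys_eq_empty ex_in_conv)
  have "coeff P (kronecker_exponent D m0) =
      (\<Sum>m\<in>Poly_Mapping.keys F. if m = m0 then Poly_Mapping.lookup F m else 0)"
    unfolding P_def coeff_sum coeff_monom
    using kronecker_exponent_inj[OF N N[OF m0] D' D'[OF m0]] by (intro sum.cong) auto
  also have "\<dots> \<noteq> 0"
    using m0 by (simp add: in_keys_iff)
  finally have "P \<noteq> 0"
    by auto
  then obtain s where "poly P s \<noteq> 0"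
    using poly_all_0_iff_0 by blast
  then show ?thesis
    unfolding P_def mpoly_eval_kronecker[symmetric] by blast
qed

lemma mpoly_eval_cong:
  assumes "\<forall>m\<in>Poly_Mapping.keys F. Poly_Mapping.keys m \<subseteq> A" and "\<forall>i\<in>A. y i = y' i"
  shows "mpoly_eval F y = mpoly_eval F y'"
  unfolding mpoly_eval_def
  using assms by (intro sum.cong refl arg_cong2[where f = "(*)"] prod.cong) (metis subsetD)

lemma alg_indep_if_onto:
  assumes "\<And>w. \<exists>x. \<forall>t\<in>{1..n}. f t x = w t"
  shows "alg_indep n f"
  unfolding alg_indep_def
proof (intro allI impI notI)
  fix F :: mpoly
  assume F: "F \<noteq> 0 \<and> (\<forall>m\<in>Poly_Mapping.keys F. Poly_Mapping.keys m \<subseteq> {1..n})"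
    and vanishes: "\<forall>x. mpoly_eval F (\<lambda>i. f i x) = 0"
  obtain y where y: "mpoly_eval F y \<noteq> 0"
    using mpoly_eval_not_identically_zero F by blast
  obtain x where "\<forall>t\<in>{1..n}. f t x = y t"
    using assms by blast
  then have "mpoly_eval F (\<lambda>i. f i x) = mpoly_eval F y"
    using F by (intro mpoly_eval_cong[where A = "{1..n}"]) auto
  with y vanishes show False
    by simp
qed


section \<open>Deformed complete symmetric polynomials\<close>

definition weak_compositions :: "nat \<Rightarrow> nat \<Rightarrow> nat list set" where
  "weak_compositions k t = {al. length al = k \<and> sum_list al = t}"

definition part_weight :: "'a::comm_semiring_1 \<Rightarrow> nat \<Rightarrow> 'a" where
  "part_weight d j = (if j = 0 then 1 else d)"

text \<open>For \<open>d = 1\<close> this is the complete homogeneous symmetric polynomial \<open>h\<^sub>t(x\<^sub>1, \<dots>, x\<^sub>k)\<close>.\<close>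
definition deformed_h :: "'a::comm_semiring_1 \<Rightarrow> nat \<Rightarrow> nat \<Rightarrow> (nat \<Rightarrow> 'a) \<Rightarrow> 'a" where
  "deformed_h d k t x =
     (\<Sum>al\<in>weak_compositions k t. \<Prod>i<k. part_weight d (al ! i) * x (Suc i) ^ (al ! i))"

lemma finite_weak_compositions: "finite (weak_compositions k t)"
proof (rule finite_subset)
  show "weak_compositions k t \<subseteq> {xs. set xs \<subseteq> {..t} \<and> length xs = k}"
    unfolding weak_compositions_def using member_le_sum_list by fastforce
qed (simp add: finite_lists_length_eq)

lemma weak_compositions_0: "weak_compositions 0 t = (if t = 0 then {[]} else {})"
  by (auto simp: weak_compositions_def)

lemma deformed_h_0: "deformed_h d 0 t x = (if t = 0 then 1 else 0)"
  by (simp add: deformed_h_def weak_compositions_0)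

lemma deformed_h_Suc:
  "deformed_h d (Suc k) t x =
     (\<Sum>n\<le>t. deformed_h d k n x * (part_weight d (t - n) * x (Suc k) ^ (t - n)))"
proof -
  define F where "F i j = part_weight d j * x (Suc i) ^ j" for i j
  have "(\<Sum>n\<le>t. deformed_h d k n x * F k (t - n)) =
        (\<Sum>n\<le>t. \<Sum>al\<in>weak_compositions k n. (\<Prod>i<k. F i (al ! i)) * F k (t - n))"
    unfolding deformed_h_def F_def sum_distrib_right ..
  also have "\<dots> =
        (\<Sum>(n, al)\<in>(SIGMA n:{..t}. weak_compositions k n). (\<Prod>i<k. F i (al ! i)) * F k (t - n))"
    by (rule sum.Sigma) (auto simp: finite_weak_compositions)
  also have "\<dots> = (\<Sum>al\<in>weak_compositions (Suc k) t. \<Prod>i<Suc k. F i (al ! i))"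
  proof (rule sum.reindex_bij_witness[where j = "\<lambda>(n, al). al @ [t - n]"
        and i = "\<lambda>al. (t - last al, butlast al)"])
    fix na assume "na \<in> (SIGMA n:{..t}. weak_compositions k n)"
    then obtain n al where na: "na = (n, al)" and n: "n \<le> t"
      and al: "length al = k" "sum_list al = n"
      by (auto simp: weak_compositions_def)
    show "(case case na of (n, al) \<Rightarrow> al @ [t - n] of al \<Rightarrow> (t - last al, butlast al)) = na"
      using na n by simp
    show "(case na of (n, al) \<Rightarrow> al @ [t - n]) \<in> weak_compositions (Suc k) t"
      using na n al by (simp add: weak_compositions_def)
    show "(\<Prod>i<Suc k. F i ((case na of (n, al) \<Rightarrow> al @ [t - n]) ! i)) =
          (case na of (n, al) \<Rightarrow> (\<Prod>i<k. F i (al ! i)) * F k (t - n))"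
      using na al by (simp add: nth_append)
  next
    fix al assume "al \<in> weak_compositions (Suc k) t"
    then have len: "length al = Suc k" and sum: "sum_list al = t"
      by (auto simp: weak_compositions_def)
    then have split: "al = butlast al @ [last al]"
      by (intro append_butlast_last_id[symmetric]) auto
    have "sum_list (butlast al) + last al = sum_list (butlast al @ [last al])"
      by simp
    also have "\<dots> = t"
      using split sum by simp
    finally have "sum_list (butlast al) + last al = t" .
    then show "(case (t - last al, butlast al) of (n, al) \<Rightarrow> al @ [t - n]) = al"
      and "(t - last al, butlast al) \<in> (SIGMA n:{..t}. weak_compositions k n)"
      using split len by (auto simp: weak_compositions_def)
  qed
  finally show ?thesis
    unfolding deformed_h_def F_def by simp
qed

definition deformed_h_fps :: "'a::comm_ring_1 \<Rightarrow> nat \<Rightarrow> (nat \<Rightarrow> 'a) \<Rightarrow> 'a fps" where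
  "deformed_h_fps d k x = Abs_fps (\<lambda>t. deformed_h d k t x)"

definition deformed_geometric_fps :: "'a::comm_ring_1 \<Rightarrow> 'a \<Rightarrow> 'a fps" where
  "deformed_geometric_fps d y = Abs_fps (\<lambda>j. part_weight d j * y ^ j)"

lemma deformed_h_fps_0: "deformed_h_fps d 0 x = 1"
  by (rule fps_ext) (simp add: deformed_h_fps_def deformed_h_0)

lemma deformed_h_fps_Suc:
  "deformed_h_fps d (Suc k) x = deformed_h_fps d k x * deformed_geometric_fps d (x (Suc k))"
  by (rule fps_ext)
    (simp add: deformed_h_fps_def deformed_geometric_fps_def deformed_h_Suc fps_mult_nth atLeast0AtMost)

lemma one_minus_X_mult_nth:
  fixes f :: "'a::comm_ring_1 fps"
  shows "((1 - fps_const c * fps_X) * f) $ n = f $ n - (if n = 0 then 0 else c * f $ (n - 1))"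
proof -
  have "(1 - fps_const c * fps_X) * f = f - fps_X * (fps_const c * f)"
    by (simp add: algebra_simps)
  then show ?thesis
    by simp
qed

lemma one_minus_X_mult_deformed_geometric_fps:
  "(1 - fps_const y * fps_X) * deformed_geometric_fps d y = 1 - fps_const ((1 - d) * y) * fps_X"
proof (rule fps_ext)
  fix n
  show "((1 - fps_const y * fps_X) * deformed_geometric_fps d y) $ n =
        (1 - fps_const ((1 - d) * y) * fps_X) $ n"
    unfolding one_minus_X_mult_nth
    by (cases n; cases "n - 1") (auto simp: deformed_geometric_fps_def part_weight_def algebra_simps)
qed

lemma prod_one_minus_X_mult_deformed_h_fps:
  "(\<Prod>i<k. 1 - fps_const (x (Suc i)) * fps_X) * deformed_h_fps d k x =
   (\<Prod>i<k. 1 - fps_const ((1 - d) * x (Suc i)) * fps_X)"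
proof (induction k)
  case 0
  then show ?case
    by (simp add: deformed_h_fps_0)
next
  case (Suc k)
  have "(\<Prod>i<Suc k. 1 - fps_const (x (Suc i)) * fps_X) * deformed_h_fps d (Suc k) x =
     ((\<Prod>i<k. 1 - fps_const (x (Suc i)) * fps_X) * deformed_h_fps d k x) *
     ((1 - fps_const (x (Suc k)) * fps_X) * deformed_geometric_fps d (x (Suc k)))"
    by (simp add: deformed_h_fps_Suc mult_ac)
  then show ?case
    using Suc by (simp add: one_minus_X_mult_deformed_geometric_fps)
qed


section \<open>Surjectivity\<close>

lemma convolution_left_cancel:
  fixes f g e :: "nat \<Rightarrow> 'a::ring_1"
  assumes e0: "e 0 = 1"
    and conv: "\<And>t. t \<le> k \<Longrightarrow> (\<Sum>i\<le>t. f i * e (t - i)) = (\<Sum>i\<le>t. g i * e (t - i))"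
  shows "t \<le> k \<Longrightarrow> f t = g t"
proof (induction t rule: less_induct)
  case (less t)
  have "(\<Sum>i<t. f i * e (t - i)) = (\<Sum>i<t. g i * e (t - i))"
    using less by (intro sum.cong) auto
  with conv[OF less.prems] show ?case
    using e0 by (simp add: lessThan_Suc_atMost[symmetric])
qed

lemma exists_prod_linear_factors_coeffs:
  fixes e :: "nat \<Rightarrow> 'a::alg_closed_field"
  assumes e0: "e 0 = 1"
  shows "\<exists>x. \<forall>n\<le>k. (\<Prod>i<k. 1 - fps_const (x (Suc i)) * fps_X) $ n = e n"
proof -
  define P :: "'a poly" where "P = (\<Sum>j\<le>k. monom (e j) (k - j))"
  have coeff_P: "coeff P n = (if n \<le> k then e (k - n) else 0)" for n
  proof -
    have "coeff P n = (\<Sum>j\<le>k. if j = k - n \<and> n \<le> k then e j else 0)"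
      unfolding P_def coeff_sum coeff_monom by (rule sum.cong) auto
    then show ?thesis
      by (simp add: sum.delta')
  qed
  have deg: "degree P = k"
  proof (rule antisym)
    show "degree P \<le> k"
      by (rule degree_le) (simp add: coeff_P)
    show "k \<le> degree P"
      by (rule le_degree) (simp add: coeff_P e0)
  qed
  with coeff_P e0 have "lead_coeff P = 1"
    by simp
  then obtain A where A: "size A = k" "P = (\<Prod>z\<in>#A. [:-z, 1:])"
    using alg_closed_imp_factorization[of P] deg by force
  obtain zs where zs: "mset zs = A"
    using ex_mset by blast
  define x where "x i = zs ! (i - 1)" for i
  have len: "length zs = k"
    using A(1) zs by (metis size_mset)
  have "P = prod_list (map (\<lambda>z. [:-z, 1:]) zs)"
    using A(2) zs by (simp add: prod_mset_prod_list[symmetric])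
  also have "\<dots> = (\<Prod>i<k. [:- x (Suc i), 1:])"
    unfolding prod.list_conv_set_nth atLeast0LessThan
    by (intro prod.cong) (simp_all add: len x_def)
  finally have factored: "P = (\<Prod>i<k. [:- x (Suc i), 1:])" .
  have reflect_linear: "fps_of_poly (reflect_poly [:- z, 1:]) = 1 - fps_const z * fps_X" for z :: 'a
    by (rule fps_ext) (simp add: reflect_poly_def fps_X_nth coeff_pCons split: nat.split)
  have "fps_of_poly (reflect_poly P) = (\<Prod>i<k. 1 - fps_const (x (Suc i)) * fps_X)"
    unfolding factored reflect_poly_prod fps_of_poly_prod reflect_linear ..
  moreover have "fps_of_poly (reflect_poly P) $ n = e n" if "n \<le> k" for n
    using that by (simp add: coeff_reflect_poly deg coeff_P)
  ultimately show ?thesis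
    by auto
qed

text \<open>The coefficients of the series \<open>E\<close> with \<open>E(0) = 1\<close> and \<open>r(T) E(T) = E(aT)\<close>.\<close>
fun dilation_coeffs :: "(nat \<Rightarrow> 'a::field) \<Rightarrow> 'a \<Rightarrow> nat \<Rightarrow> 'a" where
  "dilation_coeffs r a 0 = 1"
| "dilation_coeffs r a (Suc n) =
     - (\<Sum>i\<le>n. r (Suc i) * dilation_coeffs r a (n - i)) / (1 - a ^ Suc n)"

declare dilation_coeffs.simps(2) [simp del]

lemma dilation_coeffs_convolution:
  assumes "\<forall>n\<ge>1. a ^ n \<noteq> 1" and "r 0 = 1"
  shows "(\<Sum>i\<le>n. r i * dilation_coeffs r a (n - i)) = a ^ n * dilation_coeffs r a n"
proof (cases n)
  case 0
  then show ?thesis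
    using assms by simp
next
  case (Suc m)
  define S where "S = (\<Sum>i\<le>m. r (Suc i) * dilation_coeffs r a (m - i))"
  have "1 - a ^ Suc m \<noteq> 0"
    using assms by auto
  then have "S = - (1 - a ^ Suc m) * dilation_coeffs r a (Suc m)"
    unfolding S_def dilation_coeffs.simps(2) by (simp add: field_simps)
  moreover have "(\<Sum>i\<le>Suc m. r i * dilation_coeffs r a (Suc m - i)) =
      r 0 * dilation_coeffs r a (Suc m) + S"
    unfolding sum.atMost_Suc_shift S_def by simp
  ultimately show ?thesis
    using Suc assms(2) by (simp add: algebra_simps)
qed

lemma deformed_h_onto:
  fixes a :: "'a::alg_closed_field"
  assumes not_root: "\<forall>n\<ge>1. a ^ n \<noteq> 1"
  shows "\<exists>x. \<forall>t\<in>{1..k}. deformed_h (1 - a) k t x = w t"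
proof -
  define r where "r t = (if t = 0 then 1 else w t)" for t
  define e where "e = dilation_coeffs r a"
  obtain x where E_coeffs: "\<forall>n\<le>k. (\<Prod>i<k. 1 - fps_const (x (Suc i)) * fps_X) $ n = e n"
    using exists_prod_linear_factors_coeffs[of e k] by (auto simp: e_def)
  define E where "E = (\<Prod>i<k. 1 - fps_const (x (Suc i)) * fps_X)"
  have series_eq: "deformed_h_fps (1 - a) k x * E = E oo (fps_const a * fps_X)"
    unfolding E_def mult.commute[of _ "prod _ _"] prod_one_minus_X_mult_deformed_h_fps
    by (simp add: fps_compose_prod_distrib fps_compose_sub_distrib fps_compose_mult_distrib mult_ac)
  have h_conv: "(\<Sum>i\<le>t. deformed_h (1 - a) k i x * e (t - i)) = a ^ t * e t" if "t \<le> k" for t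
  proof -
    have "(\<Sum>i\<le>t. deformed_h (1 - a) k i x * e (t - i)) = (deformed_h_fps (1 - a) k x * E) $ t"
      unfolding fps_mult_nth atLeast0AtMost deformed_h_fps_def
      using that E_coeffs by (intro sum.cong) (simp_all add: E_def)
    also have "\<dots> = (E oo (fps_const a * fps_X)) $ t"
      by (simp only: series_eq)
    also have "\<dots> = a ^ t * e t"
      using that E_coeffs by (simp add: E_def)
    finally show ?thesis .
  qed
  have r_conv: "(\<Sum>i\<le>t. r i * e (t - i)) = a ^ t * e t" for t
    unfolding e_def using not_root by (rule dilation_coeffs_convolution) (simp add: r_def)
  have "deformed_h (1 - a) k t x = r t" if "t \<le> k" for t
    using convolution_left_cancel[of e k "\<lambda>i. deformed_h (1 - a) k i x" r t] h_conv r_conv that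
    by (simp add: e_def)
  then have "\<forall>t\<in>{1..k}. deformed_h (1 - a) k t x = w t"
    by (simp add: r_def)
  then show ?thesis
    by blast
qed

function forward_subst :: "(nat \<Rightarrow> 'a::comm_ring) \<Rightarrow> (nat \<Rightarrow> nat \<Rightarrow> 'a) \<Rightarrow> nat \<Rightarrow> 'a" where
  "forward_subst b M t = b t - (\<Sum>z = 1..<t. M t z * forward_subst b M z)"
  by auto
termination
  by (relation "measure (\<lambda>(b, M, t). t)") auto

declare forward_subst.simps [simp del]

lemma unitriangular_onto:
  fixes f g :: "nat \<Rightarrow> 'x \<Rightarrow> 'a::comm_ring"
  assumes f_onto: "\<And>w. \<exists>x. \<forall>t\<in>{1..k}. f t x = w t"
    and g_eq: "\<And>t x. g t x = f t x + c t + (\<Sum>z = 1..<t. M t z * f z x)"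
  shows "\<exists>x. \<forall>t\<in>{1..k}. g t x = w t"
proof -
  define v where "v = forward_subst (\<lambda>t. w t - c t) M"
  obtain x where x: "\<forall>t\<in>{1..k}. f t x = v t"
    using f_onto by blast
  have "g t x = w t" if "t \<in> {1..k}" for t
  proof -
    have "(\<Sum>z = 1..<t. M t z * f z x) = (\<Sum>z = 1..<t. M t z * v z)"
      using x that by (intro sum.cong) auto
    moreover have "v t = w t - c t - (\<Sum>z = 1..<t. M t z * v z)"
      unfolding v_def by (subst forward_subst.simps) simp
    ultimately show ?thesis
      using x that g_eq[of t x] by (simp add: algebra_simps)
  qed
  then show ?thesis
    by blast
qed


section \<open>The polynomials \<open>p\<^sub>t\<close> and \<open>p\<^sup>\<langle>Q\<rangle>\<^sub>t\<close>\<close>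

lemma finite_partitions_le: "finite (partitions_le t k)"
proof (rule finite_subset)
  show "partitions_le t k \<subseteq> {xs. set xs \<subseteq> {..t} \<and> length xs \<le> k}"
    unfolding partitions_le_def using member_le_sum_list by fastforce
qed (simp add: finite_lists_length_le)

definition partition_of :: "nat list \<Rightarrow> nat list" where
  "partition_of al = rev (sort (filter (\<lambda>a. a \<noteq> 0) al))"

lemma length_partition_of: "length (partition_of al) = length (filter (\<lambda>a. a \<noteq> 0) al)"
  by (simp add: partition_of_def)

lemma sum_list_partition_of: "sum_list (partition_of al) = sum_list al"
proof -
  have "sum_list (partition_of al) = sum_list (filter (\<lambda>a. a \<noteq> 0) al)"
    unfolding partition_of_def sum_list.rev by (metis mset_sort sum_mset_sum_list)
  also have "\<dots> = sum_list al"
    by (induction al) auto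
  finally show ?thesis .
qed

lemma partition_of_in_partitions_le:
  "al \<in> weak_compositions k t \<Longrightarrow> partition_of al \<in> partitions_le t k"
  unfolding partitions_le_def weak_compositions_def
  using sum_list_partition_of[of al] length_partition_of[of al]
    length_filter_le[of "\<lambda>a. a \<noteq> 0" al]
  by (auto simp: partition_of_def)

lemma prod_part_weight:
  "(\<Prod>i<length al. part_weight d (al ! i)) = d ^ length (filter (\<lambda>a. a \<noteq> 0) al)"
proof (induction al)
  case (Cons a al)
  then show ?case
    by (simp del: prod.lessThan_Suc add: prod.lessThan_Suc_shift part_weight_def)
qed simp

lemma p_poly_as_weak_compositions:
  "p_poly t q k x =
     (\<Sum>al\<in>weak_compositions k t.
        q powi (- int (length (partition_of al))) * (q - inverse q) ^ (length (partition_of al) - 1)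
        * (\<Prod>i<k. x (Suc i) ^ (al ! i)))"
proof -
  define c where "c l = q powi (- int l) * (q - inverse q) ^ (l - 1)" for l :: nat
  define X where "X al = (\<Prod>i<k. x (Suc i) ^ (al ! i))" for al
  have "p_poly t q k x = (\<Sum>lam\<in>partitions_le t k. \<Sum>al\<in>{al \<in> weak_compositions k t. partition_of al = lam}.
      c (length (partition_of al)) * X al)"
    unfolding p_poly_def monomial_sym_def sum_distrib_left
  proof (rule sum.cong[OF refl])
    fix lam assume "lam \<in> partitions_le t k"
    then have "{alpha. length alpha = k \<and> rev (sort (filter (\<lambda>a. a \<noteq> 0) alpha)) = lam} =
        {al \<in> weak_compositions k t. partition_of al = lam}"
      using sum_list_partition_of
      unfolding weak_compositions_def partitions_le_def partition_of_def by auto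
    then show "(\<Sum>alpha\<in>{alpha. length alpha = k \<and> rev (sort (filter (\<lambda>a. a \<noteq> 0) alpha)) = lam}.
        q powi - int (length lam) * (q - inverse q) ^ (length lam - 1) * (\<Prod>i<k. x (Suc i) ^ (alpha ! i))) =
      (\<Sum>al\<in>{al \<in> weak_compositions k t. partition_of al = lam}. c (length (partition_of al)) * X al)"
      by (auto simp: c_def X_def intro!: sum.cong)
  qed
  also have "\<dots> = (\<Sum>al\<in>weak_compositions k t. c (length (partition_of al)) * X al)"
    by (rule sum.group[OF finite_weak_compositions finite_partitions_le])
      (auto intro: partition_of_in_partitions_le)
  finally show ?thesis
    by (simp add: c_def X_def)
qed

lemma p_poly_coefficient:
  fixes q :: complex
  assumes "q \<noteq> 0" and "l \<ge> 1"
  shows "(q - inverse q) * (q powi (- int l) * (q - inverse q) ^ (l - 1)) = (1 - inverse q ^ 2) ^ l"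
proof -
  obtain m where l: "l = Suc m"
    using assms(2) by (cases l) auto
  have "q powi (- int l) = inverse q ^ l"
    by (simp add: power_int_minus power_inverse)
  moreover have "(q - inverse q) * inverse q = 1 - inverse q ^ 2"
    using assms(1) by (simp add: field_simps power2_eq_square)
  ultimately show ?thesis
    unfolding l by (simp flip: power_mult_distrib add: mult_ac)
qed

lemma p_poly_eq_deformed_h:
  fixes q :: complex
  assumes "q \<noteq> 0" and "t \<ge> 1"
  shows "(q - inverse q) * p_poly t q k x = deformed_h (1 - inverse q ^ 2) k t x"
  unfolding p_poly_as_weak_compositions deformed_h_def sum_distrib_left
proof (rule sum.cong[OF refl])
  fix al assume "al \<in> weak_compositions k t"
  then have len: "length al = k" and sum: "sum_list al = t"
    by (auto simp: weak_compositions_def)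
  define l where "l = length (filter (\<lambda>a. a \<noteq> 0) al)"
  have "l \<noteq> 0"
  proof
    assume "l = 0"
    then have "sum_list al = 0"
      by (simp add: l_def filter_empty_conv sum_list_eq_0_iff)
    with sum assms(2) show False
      by simp
  qed
  then have "(q - inverse q) * (q powi (- int l) * (q - inverse q) ^ (l - 1)) =
      (1 - inverse q ^ 2) ^ l"
    using p_poly_coefficient[OF assms(1)] by simp
  also have "\<dots> = (\<Prod>i<k. part_weight (1 - inverse q ^ 2) (al ! i))"
    using prod_part_weight[of "1 - inverse q ^ 2" al] by (simp add: len l_def)
  finally show "(q - inverse q) * (q powi (- int (length (partition_of al))) *
        (q - inverse q) ^ (length (partition_of al) - 1) * (\<Prod>i<k. x (Suc i) ^ (al ! i))) =
      (\<Prod>i<k. part_weight (1 - inverse q ^ 2) (al ! i) * x (Suc i) ^ (al ! i))"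
    by (simp add: length_partition_of l_def prod.distrib mult_ac)
qed

lemma p_poly_onto:
  fixes q :: complex
  assumes q0: "q \<noteq> 0" and not_root: "\<forall>n>0. q ^ n \<noteq> 1"
  shows "\<exists>x. \<forall>t\<in>{1..k}. p_poly t q k x = w t"
proof -
  have "q - inverse q \<noteq> 0"
  proof
    assume "q - inverse q = 0"
    then have "q ^ 2 = 1"
      using q0 by (simp add: field_simps power2_eq_square)
    with not_root show False
      by auto
  qed
  have "\<forall>n\<ge>1. (inverse q ^ 2) ^ n \<noteq> 1"
  proof (intro allI impI)
    fix n :: nat
    assume "n \<ge> 1"
    have "(inverse q ^ 2) ^ n = inverse (q ^ (2 * n))"
      by (simp add: power_mult power_inverse)
    moreover have "q ^ (2 * n) \<noteq> 1"
      using not_root \<open>n \<ge> 1\<close> by simp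
    ultimately show "(inverse q ^ 2) ^ n \<noteq> 1"
      by (metis inverse_1 inverse_inverse_eq)
  qed
  then obtain x where x: "\<forall>t\<in>{1..k}. deformed_h (1 - inverse q ^ 2) k t x = (q - inverse q) * w t"
    using deformed_h_onto[of "inverse q ^ 2" k "\<lambda>t. (q - inverse q) * w t"] by blast
  have "p_poly t q k x = w t" if "t \<in> {1..k}" for t
  proof -
    have "(q - inverse q) * p_poly t q k x = (q - inverse q) * w t"
      using x that p_poly_eq_deformed_h[OF q0, of t k x] by simp
    with \<open>q - inverse q \<noteq> 0\<close> show ?thesis
      by simp
  qed
  then show ?thesis
    by blast
qed

lemma pQ_poly_onto:
  fixes q :: complex
  assumes "q \<noteq> 0" and "\<forall>n>0. q ^ n \<noteq> 1"
  shows "\<exists>x. \<forall>t\<in>{1..k}. pQ_poly Q t q \<beta> k x = w t"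
  using p_poly_onto[OF assms]
  by (rule unitriangular_onto[where c = "\<lambda>t. beta_tilde q \<beta> * Q powi (- int t)"
        and M = "\<lambda>t z. (q - inverse q) * beta_tilde q \<beta> * Q powi (int z - int t)"])
    (simp add: pQ_poly_def sum_distrib_left mult_ac)

theorem mainTheorem19:
  fixes q Q \<beta> :: complex and k :: nat
  assumes "q \<noteq> 0" and "\<forall>n>0. q ^ n \<noteq> 1"
    and "k > 0" and "Q \<noteq> 0" and "\<beta> \<noteq> 0"
  shows "alg_indep k (\<lambda>t. pQ_poly Q t q \<beta> k)"
  using pQ_poly_onto[OF assms(1,2)] by (rule alg_indep_if_onto)

end
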